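(* Let $\alpha,\beta>-1$, $M\ge0$, $a_0,\dots,a_M\in\mathbb{R}$ and $f_M(x)=\sum_{m=0}^M a_mP^{(\alpha,\beta)}_m(x)$. For integers $n\ge-1$ and $y\in[-1,1]$ let $\tilde R_n(y)=\int_{-1}^{y}f_M(y-1-t)P^{(\alpha,\beta)}_n(t)\,\mathrm{d}t$ (so $\tilde R_{-1}\equiv0$). Then for every integer $n\ge0$ and $y\in[-1,1]$, $$\tilde R_{n+1}(y)=\frac{1}{A_{n+1}}\int_{-1}^{y}\tilde R_n(s)\,\mathrm{d}s-\frac{B_n}{A_{n+1}}\tilde R_n(y)-\frac{C_{n-1}}{A_{n+1}}\tilde R_{n-1}(y)+\frac{S_n}{A_{n+1}}\int_{-1}^{y}f_M(t)\,\mathrm{d}t,$$ where $$S_n=\frac{2(-1)^{n+1}(\beta)_{n+1}}{(\alpha+\beta+n)(n+1)!}$$ (and the term $C_{n-1}\tilde R_{n-1}$ is $0$ when $n=0$).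
   Context: Jacobi polynomials: $P^{(\alpha,\beta)}_n(x)=\frac{(\alpha+1)_n}{n!}\,{}_2F_1\!\left(-n,\,n+\alpha+\beta+1;\,\alpha+1;\,\frac{1-x}{2}\right)$ for $n\ge0$, $P^{(\alpha,\beta)}_n:=0$ for $n<0$; $(a)_n=a(a+1)\cdots(a+n-1)$, $(a)_0=1$. The constants are $A_{m}=\dfrac{2(\alpha+\beta+m)}{(\alpha+\beta+2m-1)(\alpha+\beta+2m)}$, $B_m=\dfrac{2(\alpha-\beta)}{(\alpha+\beta+2m)(\alpha+\beta+2m+2)}$, $C_m=-\dfrac{2(\alpha+m+1)(\beta+m+1)}{(\alpha+\beta+m+1)(\alpha+\beta+2m+2)(\alpha+\beta+2m+3)}$; they satisfy $P^{(\alpha,\beta)}_n=A_{n+1}\frac{\mathrm d}{\mathrm dx}P^{(\alpha,\beta)}_{n+1}+B_n\frac{\mathrm d}{\mathrm dx}P^{(\alpha,\beta)}_n+C_{n-1}\frac{\mathrm d}{\mathrm dx}P^{(\alpha,\beta)}_{n-1}$. $\tilde R_n(y)$ is the convolution $\int_{-1}^{x+1}f_M(x-t)P^{(\alpha,\beta)}_n(t)\,\mathrm dt$ at $x=y-1$. *)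

theory Defs
  imports "HOL-Analysis.Analysis"
begin

text \<open>Jacobi polynomial via the terminating hypergeometric series
  (alpha+1)_n / n! * 2F1(-n, n+alpha+beta+1; alpha+1; (1-x)/2), and 0 for n < 0.\<close>
definition jacobiP :: "real \<Rightarrow> real \<Rightarrow> int \<Rightarrow> real \<Rightarrow> real" where
  "jacobiP \<alpha> \<beta> n x =
     (if n < 0 then 0 else
        pochhammer (\<alpha> + 1) (nat n) / fact (nat n) *
        (\<Sum>k\<le>nat n. pochhammer (- real (nat n)) k * pochhammer (real (nat n) + \<alpha> + \<beta> + 1) k
                      / (pochhammer (\<alpha> + 1) k * fact k) * ((1 - x) / 2) ^ k))"

definition jacA :: "real \<Rightarrow> real \<Rightarrow> int \<Rightarrow> real" where
  "jacA \<alpha> \<beta> m = 2 * (\<alpha> + \<beta> + of_int m) /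
     ((\<alpha> + \<beta> + 2 * of_int m - 1) * (\<alpha> + \<beta> + 2 * of_int m))"

definition jacB :: "real \<Rightarrow> real \<Rightarrow> int \<Rightarrow> real" where
  "jacB \<alpha> \<beta> m = 2 * (\<alpha> - \<beta>) /
     ((\<alpha> + \<beta> + 2 * of_int m) * (\<alpha> + \<beta> + 2 * of_int m + 2))"

definition jacC :: "real \<Rightarrow> real \<Rightarrow> int \<Rightarrow> real" where
  "jacC \<alpha> \<beta> m = - (2 * (\<alpha> + of_int m + 1) * (\<beta> + of_int m + 1)) /
     ((\<alpha> + \<beta> + of_int m + 1) * (\<alpha> + \<beta> + 2 * of_int m + 2) * (\<alpha> + \<beta> + 2 * of_int m + 3))"

definition jacS :: "real \<Rightarrow> real \<Rightarrow> nat \<Rightarrow> real" where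
  "jacS \<alpha> \<beta> n = 2 * (-1) ^ (n + 1) * pochhammer \<beta> (n + 1) /
     ((\<alpha> + \<beta> + real n) * fact (n + 1))"

definition jacobi_sum :: "real \<Rightarrow> real \<Rightarrow> (nat \<Rightarrow> real) \<Rightarrow> nat \<Rightarrow> real \<Rightarrow> real" where
  "jacobi_sum \<alpha> \<beta> a M x = (\<Sum>m\<le>M. a m * jacobiP \<alpha> \<beta> (int m) x)"

definition Rtilde :: "real \<Rightarrow> real \<Rightarrow> (real \<Rightarrow> real) \<Rightarrow> int \<Rightarrow> real \<Rightarrow> real" where
  "Rtilde \<alpha> \<beta> f n y = integral {-1..y} (\<lambda>t. f (y - 1 - t) * jacobiP \<alpha> \<beta> n t)"

end

(*
  Let Q_n = A_{n+1} P_{n+1} + B_n P_n + C_{n-1} P_{n-1}. The derivative relation for the constants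
  says Q_n' = P_n; it is checked coefficientwise on the expansion of the Jacobi polynomials in powers
  of (1 - x)/2. At x = -1 the Chu-Vandermonde identity gives P_m(-1) = (-1)^m (beta+1)_m / m!, and
  hence Q_n(-1) = S_n.

  Since f_M is a polynomial, the convolution y |-> int_{-1}^y f_M(y-1-t) g(t) dt may be
  differentiated under the integral sign. Together with an integration by parts in t this shows
  that convolving with Q_n is the same as integrating the convolution with Q_n' = P_n, up to the
  boundary term Q_n(-1) int_{-1}^y f_M. By linearity the convolution with Q_n is
  A_{n+1} R_{n+1} + B_n R_n + C_{n-1} R_{n-1}, and solving for R_{n+1} gives the recurrence.
*)
theory Submission
  imports Defs "HOL-Computational_Algebra.Polynomial"
begin

lemma has_real_derivative_integral_upper_separable:
  fixes g gy :: "real \<Rightarrow> real \<Rightarrow> real"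
  assumes I: "finite I"
    and sep: "\<And>y t. g y t = (\<Sum>i\<in>I. u i y * w i t)"
    and du: "\<And>i y. (u i has_real_derivative u' i y) (at y)"
    and cw: "\<And>i. continuous_on UNIV (w i)"
    and dg: "\<And>y t. ((\<lambda>y. g y t) has_real_derivative gy y t) (at y)"
    and y: "y \<in> {a..b}"
  shows "((\<lambda>y. integral {a..y} (g y)) has_real_derivative g y y + integral {a..y} (gy y)) (at y within {a..b})"
proof -
  have integral_sep: "integral {a..z} (\<lambda>t. \<Sum>i\<in>I. v i * w i t) = (\<Sum>i\<in>I. v i * integral {a..z} (w i))"
    for v z
    by (subst integral_sum[OF I])
       (auto intro!: integrable_continuous_interval continuous_intros continuous_on_subset[OF cw])
  have "gy z t = (\<Sum>i\<in>I. u' i z * w i t)" for z t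
  proof (rule DERIV_unique[OF dg])
    show "((\<lambda>y. g y t) has_real_derivative (\<Sum>i\<in>I. u' i z * w i t)) (at z)"
      unfolding sep by (auto intro!: derivative_eq_intros du)
  qed
  then have "gy z = (\<lambda>t. \<Sum>i\<in>I. u' i z * w i t)" for z
    by blast
  then have "g y y + integral {a..y} (gy y) = (\<Sum>i\<in>I. u' i y * integral {a..y} (w i) + u i y * w i y)"
    by (simp add: integral_sep sep sum.distrib)
  moreover have "g z = (\<lambda>t. \<Sum>i\<in>I. u i z * w i t)" for z
    using sep by blast
  moreover have "((\<lambda>z. \<Sum>i\<in>I. u i z * integral {a..z} (w i)) has_real_derivative
      (\<Sum>i\<in>I. u' i y * integral {a..y} (w i) + u i y * w i y)) (at y within {a..b})"
  proof (rule DERIV_sum, rule DERIV_mult[THEN DERIV_cong])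
    fix i
    have "continuous_on {a..b} (w i)"
      by (rule continuous_on_subset[OF cw]) simp
    then show "((\<lambda>z. integral {a..z} (w i)) has_real_derivative w i y) (at y within {a..b})"
      by (rule integral_has_real_derivative[OF _ y])
  qed (auto intro: has_field_derivative_at_within du)
  ultimately show ?thesis
    by (simp add: integral_sep)
qed

lemma poly_diff_eq_sum_separated:
  fixes p :: "real poly"
  shows "poly p (y - t) = (\<Sum>(k, i)\<in>Sigma {..degree p} (\<lambda>k. {..k}).
            (coeff p k * of_nat (k choose i) * y ^ i) * (- t) ^ (k - i))"
proof -
  have "poly p (y - t) = (\<Sum>k\<le>degree p. coeff p k * (y + - t) ^ k)"
    by (simp add: poly_altdef)
  also have "\<dots> = (\<Sum>k\<le>degree p. \<Sum>i\<le>k. coeff p k * of_nat (k choose i) * y ^ i * (- t) ^ (k - i))"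
    unfolding binomial_ring by (simp add: sum_distrib_left mult.assoc)
  finally show ?thesis
    by (simp add: sum.Sigma)
qed

lemma has_real_derivative_poly_convolution:
  fixes p :: "real poly"
  assumes h: "continuous_on UNIV h" and y: "y \<in> {a..b}"
  shows "((\<lambda>y. integral {a..y} (\<lambda>t. poly p (y - t) * h t)) has_real_derivative
     poly p 0 * h y + integral {a..y} (\<lambda>t. poly (pderiv p) (y - t) * h t)) (at y within {a..b})"
proof -
  let ?I = "Sigma {..degree p} (\<lambda>k. {..k})"
  have "((\<lambda>y. integral {a..y} ((\<lambda>y t. poly p (y - t) * h t) y)) has_real_derivative
     (\<lambda>y t. poly p (y - t) * h t) y y + integral {a..y} ((\<lambda>y t. poly (pderiv p) (y - t) * h t) y))
     (at y within {a..b})"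
  proof (rule has_real_derivative_integral_upper_separable[where I = ?I
        and u = "\<lambda>(k, i) y. coeff p k * of_nat (k choose i) * y ^ i"
        and u' = "\<lambda>(k, i) y. coeff p k * of_nat (k choose i) * (of_nat i * y ^ (i - 1))"
        and w = "\<lambda>(k, i) t. (- t) ^ (k - i) * h t", OF _ _ _ _ _ y])
    show "poly p (y - t) * h t = (\<Sum>i\<in>?I. (case i of (k, i) \<Rightarrow> \<lambda>y. coeff p k * of_nat (k choose i) * y ^ i) y *
        (case i of (k, i) \<Rightarrow> \<lambda>t. (- t) ^ (k - i) * h t) t)" for y t
      unfolding poly_diff_eq_sum_separated by (simp add: sum_distrib_right split_beta mult.assoc)
    show "((case i of (k, i) \<Rightarrow> \<lambda>y. coeff p k * of_nat (k choose i) * y ^ i) has_real_derivative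
          (case i of (k, i) \<Rightarrow> \<lambda>y. coeff p k * of_nat (k choose i) * (of_nat i * y ^ (i - 1))) y) (at y)" for i y
      by (cases i) (auto intro!: derivative_eq_intros)
    show "continuous_on UNIV (case i of (k, i) \<Rightarrow> \<lambda>t. (- t) ^ (k - i) * h t)" for i
      by (cases i) (auto intro!: continuous_intros h)
    show "((\<lambda>y. poly p (y - t) * h t) has_real_derivative poly (pderiv p) (y - t) * h t) (at y)" for y t
      by (auto intro!: derivative_eq_intros poly_DERIV[THEN DERIV_chain2])
  qed simp
  then show ?thesis
    by simp
qed

lemma poly_convolution_pderiv_by_parts:
  fixes p :: "real poly"
  assumes dQ: "\<And>t. (Q has_real_derivative P t) (at t)" and P: "continuous_on UNIV P" and z: "a \<le> z"
  shows "integral {a..z} (\<lambda>t. poly (pderiv p) (z - t) * Q t)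
    = poly p (z - a) * Q a - poly p 0 * Q z + integral {a..z} (\<lambda>t. poly p (z - t) * P t)"
proof -
  have "((\<lambda>t. - poly (pderiv p) (z - t) * Q t) has_integral
      poly p 0 * Q z - poly p (z - a) * Q a - integral {a..z} (\<lambda>t. poly p (z - t) * P t)) {a..z}"
  proof (rule integration_by_parts[OF bounded_bilinear_mult z])
    show "continuous_on {a..z} (\<lambda>t. poly p (z - t))"
      by (auto intro!: continuous_intros)
    show "continuous_on {a..z} Q"
      by (rule DERIV_continuous_on[where D = P]) (auto intro: has_field_derivative_at_within dQ)
    show "((\<lambda>t. poly p (z - t)) has_vector_derivative - poly (pderiv p) (z - t)) (at t)" for t
      unfolding has_real_derivative_iff_has_vector_derivative[symmetric]
      by (auto intro!: derivative_eq_intros poly_DERIV[THEN DERIV_chain2])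
    show "(Q has_vector_derivative P t) (at t)" for t
      using dQ has_real_derivative_iff_has_vector_derivative by blast
    have "(\<lambda>t. poly p (z - t) * P t) integrable_on {a..z}"
      by (auto intro!: integrable_continuous_interval continuous_intros continuous_on_subset[OF P])
    then show "((\<lambda>t. poly p (z - t) * P t) has_integral poly p (z - z) * Q z - poly p (z - a) * Q a -
        (poly p 0 * Q z - poly p (z - a) * Q a - integral {a..z} (\<lambda>t. poly p (z - t) * P t))) {a..z}"
      by (simp add: integrable_integral)
  qed
  from has_integral_neg[OF this] show ?thesis
    by (simp add: integral_unique)
qed

lemma poly_convolution_antiderivative:
  fixes p :: "real poly"
  assumes dQ: "\<And>t. (Q has_real_derivative P t) (at t)" and P: "continuous_on UNIV P" and y: "a \<le> y"
  shows "integral {a..y} (\<lambda>t. poly p (y - t) * Q t)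
    = integral {a..y} (\<lambda>s. integral {a..s} (\<lambda>t. poly p (s - t) * P t)) + Q a * integral {a..y} (\<lambda>s. poly p (s - a))"
proof -
  define GP where "GP s = integral {a..s} (\<lambda>t. poly p (s - t) * P t)" for s
  define D where "D z = integral {a..z} (\<lambda>t. poly p (z - t) * Q t)
      - (integral {a..z} GP + Q a * integral {a..z} (\<lambda>s. poly p (s - a)))" for z
  have Q: "continuous_on UNIV Q"
    by (rule DERIV_continuous_on[where D = P]) (auto intro: has_field_derivative_at_within dQ)
  have GP: "continuous_on {a..y} GP"
    unfolding GP_def
    by (rule DERIV_continuous_on, rule has_real_derivative_poly_convolution[OF P])
  have kernel: "continuous_on {a..y} (\<lambda>s. poly p (s - a))"
    by (auto intro!: continuous_intros)
  have "(D has_real_derivative 0) (at z within {a..y})" if z: "z \<in> {a..y}" for z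
  proof -
    have "(D has_real_derivative (poly p 0 * Q z + integral {a..z} (\<lambda>t. poly (pderiv p) (z - t) * Q t))
        - (GP z + Q a * poly p (z - a))) (at z within {a..y})"
      unfolding D_def[abs_def]
      by (intro DERIV_diff DERIV_add DERIV_cmult has_real_derivative_poly_convolution[OF Q z]
          integral_has_real_derivative[OF GP z] integral_has_real_derivative[OF kernel z])
    moreover have "a \<le> z"
      using z by simp
    ultimately show ?thesis
      using poly_convolution_pderiv_by_parts[OF dQ P, where p = p] by (simp add: GP_def)
  qed
  then obtain c where "\<forall>z\<in>{a..y}. D z = c"
    using has_field_derivative_zero_constant[of "{a..y}" D] by auto
  moreover have "D a = 0"
    by (simp add: D_def)
  ultimately have "D y = 0"
    using y by force
  then show ?thesis
    by (simp add: D_def GP_def[abs_def])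
qed

definition jacobi_coeff :: "real \<Rightarrow> real \<Rightarrow> nat \<Rightarrow> nat \<Rightarrow> real" where
  "jacobi_coeff \<alpha> \<beta> m k = pochhammer (\<alpha> + 1) m / fact m *
     (pochhammer (- real m) k * pochhammer (real m + \<alpha> + \<beta> + 1) k / (pochhammer (\<alpha> + 1) k * fact k))"

lemma jacobiP_eq_sum_jacobi_coeff:
  assumes "m \<le> N"
  shows "jacobiP \<alpha> \<beta> (int m) x = (\<Sum>k\<le>N. jacobi_coeff \<alpha> \<beta> m k * ((1 - x) / 2) ^ k)"
proof -
  have "jacobiP \<alpha> \<beta> (int m) x = (\<Sum>k\<le>m. jacobi_coeff \<alpha> \<beta> m k * ((1 - x) / 2) ^ k)"
    unfolding jacobiP_def jacobi_coeff_def by (simp add: sum_distrib_left mult.assoc)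
  also have "\<dots> = (\<Sum>k\<le>N. jacobi_coeff \<alpha> \<beta> m k * ((1 - x) / 2) ^ k)"
    by (rule sum.mono_neutral_left)
       (use assms in \<open>auto simp: jacobi_coeff_def pochhammer_of_nat_eq_0_lemma\<close>)
  finally show ?thesis .
qed

lemma jacobiP_eq_poly: "\<exists>p. jacobiP \<alpha> \<beta> k = poly p"
proof (cases "k < 0")
  case True
  then have "jacobiP \<alpha> \<beta> k = poly 0"
    by (simp add: jacobiP_def fun_eq_iff)
  then show ?thesis ..
next
  case False
  then obtain m where k: "k = int m"
    by (metis nonneg_int_cases not_less)
  have "jacobiP \<alpha> \<beta> k = poly (\<Sum>i\<le>m. smult (jacobi_coeff \<alpha> \<beta> m i) ([:1/2, -1/2:] ^ i))"
    unfolding k by (simp add: fun_eq_iff jacobiP_eq_sum_jacobi_coeff[OF order_refl] poly_sum diff_divide_distrib)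
  then show ?thesis ..
qed

lemma continuous_on_jacobiP: "continuous_on S (jacobiP \<alpha> \<beta> k)"
proof -
  obtain p where "jacobiP \<alpha> \<beta> k = poly p"
    using jacobiP_eq_poly by blast
  then show ?thesis
    using continuous_on_poly[OF continuous_on_id] by simp
qed

lemma jacobi_sum_eq_poly: "\<exists>p. jacobi_sum \<alpha> \<beta> a M = poly p"
proof -
  have "\<forall>m. \<exists>p. jacobiP \<alpha> \<beta> (int m) = poly p"
    using jacobiP_eq_poly by blast
  then obtain P where P: "\<And>m. jacobiP \<alpha> \<beta> (int m) = poly (P m)"
    by metis
  have "jacobi_sum \<alpha> \<beta> a M = poly (\<Sum>m\<le>M. smult (a m) (P m))"
    by (simp add: fun_eq_iff jacobi_sum_def poly_sum P)
  then show ?thesis ..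
qed

lemma pochhammer_shift_mult: "pochhammer a k * (a + of_nat k) = a * pochhammer (a + 1) k"
  by (metis pochhammer_Suc pochhammer_rec)

lemma jacobi_coeff_Suc_right:
  assumes "\<alpha> > -1"
  shows "(\<alpha> + 1 + k) * (k + 1) * jacobi_coeff \<alpha> \<beta> m (Suc k)
       = (real k - real m) * (m + \<alpha> + \<beta> + 1 + k) * jacobi_coeff \<alpha> \<beta> m k"
proof -
  have "pochhammer (\<alpha> + 1) k \<noteq> 0" "\<alpha> + 1 + k \<noteq> 0"
    using assms by (auto simp: pochhammer_eq_0_iff)
  then show ?thesis
    by (simp add: jacobi_coeff_def pochhammer_Suc divide_simps)
qed

lemma jacobi_coeff_Suc_Suc:
  assumes "\<alpha> > -1"
  shows "(m + \<alpha> + \<beta> + 1) * (\<alpha> + 1 + k) * (k + 1) * jacobi_coeff \<alpha> \<beta> (Suc m) (Suc k)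
       = - (\<alpha> + m + 1) * (m + \<alpha> + \<beta> + 1 + k) * (m + \<alpha> + \<beta> + 2 + k) * jacobi_coeff \<alpha> \<beta> m k"
proof -
  define L where "L = m + \<alpha> + \<beta> + 1"
  define X where "X = pochhammer (- real m) k"
  define Y where "Y = pochhammer L k"
  define Z where "Z = pochhammer (real (Suc m) + \<alpha> + \<beta> + 1) (Suc k)"
  define D where "D = pochhammer (\<alpha> + 1) k * fact k"
  define W where "W = pochhammer (\<alpha> + 1) m / fact m"
  define a where "a = \<alpha> + 1 + m"
  define b where "b = \<alpha> + 1 + k"
  define k1 where "k1 = real k + 1"
  define m1 where "m1 = real m + 1"
  have nz: "D \<noteq> 0" "b \<noteq> 0" "k1 \<noteq> 0" "m1 \<noteq> 0"
    using assms by (auto simp: D_def b_def k1_def m1_def pochhammer_eq_0_iff)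
  have LZ: "L * Z = Y * (L + k) * (L + k + 1)"
    using pochhammer_shift_mult[of L k] by (simp add: L_def Y_def Z_def pochhammer_Suc algebra_simps)
  have c: "jacobi_coeff \<alpha> \<beta> m k = W * (X * Y / D)"
    by (simp add: jacobi_coeff_def W_def X_def Y_def D_def L_def)
  have "pochhammer (\<alpha> + 1) (Suc m) / fact (Suc m) = W * a / m1"
    by (simp add: W_def a_def m1_def pochhammer_Suc algebra_simps)
  moreover have "pochhammer (- real (Suc m)) (Suc k) = - m1 * X"
    by (simp add: X_def m1_def pochhammer_rec algebra_simps)
  moreover have "pochhammer (\<alpha> + 1) (Suc k) * fact (Suc k) = D * (b * k1)"
    by (simp add: D_def b_def k1_def pochhammer_Suc algebra_simps)
  ultimately have "jacobi_coeff \<alpha> \<beta> (Suc m) (Suc k)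
      = W * a / m1 * (- m1 * X * Z / (D * (b * k1)))"
    unfolding jacobi_coeff_def Z_def by simp
  then have "b * k1 * jacobi_coeff \<alpha> \<beta> (Suc m) (Suc k) = - W * a * X * Z / D"
    using nz by (simp add: field_simps)
  then have "L * b * k1 * jacobi_coeff \<alpha> \<beta> (Suc m) (Suc k) = - W * a * X * (L * Z) / D"
    by (simp add: mult_ac)
  also have "\<dots> = - (\<alpha> + m + 1) * (L + k) * (L + k + 1) * jacobi_coeff \<alpha> \<beta> m k"
    unfolding LZ c a_def using nz by (simp add: field_simps)
  finally show ?thesis
    by (simp add: L_def b_def k1_def add_ac)
qed

lemma jacobi_coeff_Suc_left:
  assumes "\<alpha> > -1"
  shows "(real k - real m - 1) * (m + \<alpha> + \<beta> + 1) * jacobi_coeff \<alpha> \<beta> (Suc m) k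
     = - (\<alpha> + m + 1) * (m + \<alpha> + \<beta> + 1 + k) * jacobi_coeff \<alpha> \<beta> m k"
proof -
  define L where "L = m + \<alpha> + \<beta> + 1"
  define X where "X = pochhammer (- real m) k"
  define X' where "X' = pochhammer (- real (Suc m)) k"
  define Y where "Y = pochhammer L k"
  define Z where "Z = pochhammer (real (Suc m) + \<alpha> + \<beta> + 1) k"
  define D where "D = pochhammer (\<alpha> + 1) k * fact k"
  define W where "W = pochhammer (\<alpha> + 1) m / fact m"
  define m1 where "m1 = real m + 1"
  have nz: "m1 \<noteq> 0" "D \<noteq> 0"
    using assms by (auto simp: m1_def D_def pochhammer_eq_0_iff)
  have X': "X' * (real k - real m - 1) = - m1 * X"
    using pochhammer_shift_mult[of "- real (Suc m)" k] by (simp add: X_def X'_def m1_def algebra_simps)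
  have Z: "Z * L = Y * (L + k)"
    using pochhammer_shift_mult[of L k] by (simp add: L_def Y_def Z_def algebra_simps)
  have c: "jacobi_coeff \<alpha> \<beta> m k = W * (X * Y / D)"
    by (simp add: jacobi_coeff_def W_def X_def Y_def D_def L_def)
  have "pochhammer (\<alpha> + 1) (Suc m) / fact (Suc m) = W * (\<alpha> + m + 1) / m1"
    by (simp add: W_def m1_def pochhammer_Suc algebra_simps)
  then have "jacobi_coeff \<alpha> \<beta> (Suc m) k = W * (\<alpha> + m + 1) / m1 * (X' * Z / D)"
    unfolding jacobi_coeff_def X'_def Z_def D_def by simp
  then have "(real k - real m - 1) * L * jacobi_coeff \<alpha> \<beta> (Suc m) k
      = W * (\<alpha> + m + 1) / m1 * (X' * (real k - real m - 1)) * (Z * L) / D"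
    by (simp add: mult_ac)
  also have "\<dots> = - (\<alpha> + m + 1) * (L + k) * jacobi_coeff \<alpha> \<beta> m k"
    unfolding X' Z c using nz by (simp add: field_simps)
  finally show ?thesis
    by (simp add: L_def add_ac)
qed

lemma jacobi_coeff_neighbours:
  assumes a: "\<alpha> > -1" and b: "\<beta> > -1"
    and K: "jacobi_coeff \<alpha> \<beta> (Suc m) j = (\<alpha> + 1 + j) * (j + 1) * K"
  shows "(\<alpha> + \<beta> + m + 2) * jacobi_coeff \<alpha> \<beta> (Suc (Suc m)) (Suc j)
      = - (\<alpha> + m + 2) * (\<alpha> + \<beta> + m + 2 + j) * (\<alpha> + \<beta> + m + 3 + j) * K"
    and "jacobi_coeff \<alpha> \<beta> (Suc m) (Suc j) = (real j - real m - 1) * (\<alpha> + \<beta> + m + 2 + j) * K"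
    and "(\<alpha> + m + 1) * jacobi_coeff \<alpha> \<beta> m (Suc j)
      = - (real j - real m) * (\<alpha> + \<beta> + m + 1) * (real j - real m - 1) * K"
proof -
  have nz: "(\<alpha> + 1 + j) * (j + 1) \<noteq> 0" "\<alpha> + \<beta> + m + 2 + j \<noteq> 0"
    using a b by (simp, linarith)+
  show "(\<alpha> + \<beta> + m + 2) * jacobi_coeff \<alpha> \<beta> (Suc (Suc m)) (Suc j)
      = - (\<alpha> + m + 2) * (\<alpha> + \<beta> + m + 2 + j) * (\<alpha> + \<beta> + m + 3 + j) * K"
  proof (rule mult_left_cancel[OF nz(1), THEN iffD1])
    show "(\<alpha> + 1 + j) * (j + 1) * ((\<alpha> + \<beta> + m + 2) * jacobi_coeff \<alpha> \<beta> (Suc (Suc m)) (Suc j))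
      = (\<alpha> + 1 + j) * (j + 1) * (- (\<alpha> + m + 2) * (\<alpha> + \<beta> + m + 2 + j) * (\<alpha> + \<beta> + m + 3 + j) * K)"
      using jacobi_coeff_Suc_Suc[OF a, where m = "Suc m" and k = j and \<beta> = \<beta>]
      unfolding K by (simp add: algebra_simps)
  qed
  show c2: "jacobi_coeff \<alpha> \<beta> (Suc m) (Suc j) = (real j - real m - 1) * (\<alpha> + \<beta> + m + 2 + j) * K"
  proof (rule mult_left_cancel[OF nz(1), THEN iffD1])
    show "(\<alpha> + 1 + j) * (j + 1) * jacobi_coeff \<alpha> \<beta> (Suc m) (Suc j)
      = (\<alpha> + 1 + j) * (j + 1) * ((real j - real m - 1) * (\<alpha> + \<beta> + m + 2 + j) * K)"
      using jacobi_coeff_Suc_right[OF a, where m = "Suc m" and k = j and \<beta> = \<beta>]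
      unfolding K by (simp add: algebra_simps)
  qed
  show "(\<alpha> + m + 1) * jacobi_coeff \<alpha> \<beta> m (Suc j)
      = - (real j - real m) * (\<alpha> + \<beta> + m + 1) * (real j - real m - 1) * K"
  proof (rule mult_left_cancel[OF nz(2), THEN iffD1])
    show "(\<alpha> + \<beta> + m + 2 + j) * ((\<alpha> + m + 1) * jacobi_coeff \<alpha> \<beta> m (Suc j))
      = (\<alpha> + \<beta> + m + 2 + j) * (- (real j - real m) * (\<alpha> + \<beta> + m + 1) * (real j - real m - 1) * K)"
      using jacobi_coeff_Suc_left[OF a, where m = m and k = "Suc j" and \<beta> = \<beta>]
      unfolding c2 by (simp add: algebra_simps)
  qed
qed

text \<open>The relation P_n = A_{n+1} P'_{n+1} + B_n P'_n + C_{n-1} P'_{n-1} for n = m + 1, read off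
  coefficientwise in powers of (1 - x) / 2.\<close>

lemma jacobi_coeff_three_term:
  assumes a: "\<alpha> > -1" and b: "\<beta> > -1" and L: "m = 0 \<Longrightarrow> \<alpha> + \<beta> + 1 \<noteq> 0"
  shows "jacobi_coeff \<alpha> \<beta> (Suc m) j = - (real j + 1) / 2 *
    (jacA \<alpha> \<beta> (int m + 2) * jacobi_coeff \<alpha> \<beta> (Suc (Suc m)) (Suc j)
     + jacB \<alpha> \<beta> (int m + 1) * jacobi_coeff \<alpha> \<beta> (Suc m) (Suc j)
     + jacC \<alpha> \<beta> (int m) * jacobi_coeff \<alpha> \<beta> m (Suc j))"
proof -
  define K where "K = jacobi_coeff \<alpha> \<beta> (Suc m) j / ((\<alpha> + 1 + j) * (j + 1))"
  define S0 where "S0 = \<alpha> + \<beta> + 2 * real m + 2"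
  define S1 where "S1 = \<alpha> + \<beta> + 2 * real m + 3"
  define S2 where "S2 = \<alpha> + \<beta> + 2 * real m + 4"
  define T where "T = \<alpha> + \<beta> + m + 1"
  have "\<alpha> + 1 + j \<noteq> 0"
    using a by linarith
  then have c: "jacobi_coeff \<alpha> \<beta> (Suc m) j = (\<alpha> + 1 + j) * (j + 1) * K"
    by (simp add: K_def)
  note neighbours = jacobi_coeff_neighbours[OF a b c]
  have nz: "S0 \<noteq> 0" "S1 \<noteq> 0" "S2 \<noteq> 0" "T \<noteq> 0"
    using a b L unfolding S0_def S1_def S2_def T_def by (cases m; simp; linarith)+
  have A: "jacA \<alpha> \<beta> (int m + 2) * jacobi_coeff \<alpha> \<beta> (Suc (Suc m)) (Suc j)
      = 2 / (S1 * S2) * ((\<alpha> + \<beta> + m + 2) * jacobi_coeff \<alpha> \<beta> (Suc (Suc m)) (Suc j))"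
    by (simp add: jacA_def S1_def S2_def algebra_simps)
  have B: "jacB \<alpha> \<beta> (int m + 1) = 2 * (\<alpha> - \<beta>) / (S0 * S2)"
    by (simp add: jacB_def S0_def S2_def algebra_simps)
  have C: "jacC \<alpha> \<beta> (int m) * jacobi_coeff \<alpha> \<beta> m (Suc j)
      = - 2 * (\<beta> + m + 1) / (T * S0 * S1) * ((\<alpha> + m + 1) * jacobi_coeff \<alpha> \<beta> m (Suc j))"
    by (simp add: jacC_def S0_def S1_def T_def algebra_simps)
  have key: "- (\<alpha> + m + 2) * (\<alpha> + \<beta> + m + 2 + j) * (\<alpha> + \<beta> + m + 3 + j) * S0
      + (\<alpha> - \<beta>) * (real j - real m - 1) * (\<alpha> + \<beta> + m + 2 + j) * S1
      + (\<beta> + m + 1) * (real j - real m) * (real j - real m - 1) * S2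
      = - (\<alpha> + 1 + j) * S0 * S1 * S2"
    unfolding S0_def S1_def S2_def by algebra
  have "jacA \<alpha> \<beta> (int m + 2) * jacobi_coeff \<alpha> \<beta> (Suc (Suc m)) (Suc j)
     + jacB \<alpha> \<beta> (int m + 1) * jacobi_coeff \<alpha> \<beta> (Suc m) (Suc j)
     + jacC \<alpha> \<beta> (int m) * jacobi_coeff \<alpha> \<beta> m (Suc j)
     = 2 * (- (\<alpha> + m + 2) * (\<alpha> + \<beta> + m + 2 + j) * (\<alpha> + \<beta> + m + 3 + j) * S0
      + (\<alpha> - \<beta>) * (real j - real m - 1) * (\<alpha> + \<beta> + m + 2 + j) * S1
      + (\<beta> + m + 1) * (real j - real m) * (real j - real m - 1) * S2) / (S0 * S1 * S2) * K" (is "?combination = _")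
    unfolding A B C neighbours T_def[symmetric] using nz by (simp add: field_simps)
  also have "\<dots> = - 2 * (\<alpha> + 1 + j) * K"
    unfolding key using nz by simp
  finally have combination: "?combination = - 2 * (\<alpha> + 1 + j) * K" .
  show ?thesis
    unfolding combination c by (simp add: field_simps)
qed

lemma has_real_derivative_sum_powers_half_one_minus:
  "((\<lambda>x. \<Sum>k\<le>N. c k * ((1 - x) / 2) ^ k) has_real_derivative
     (\<Sum>j<N. - (real j + 1) / 2 * c (Suc j) * ((1 - x) / 2) ^ j)) (at x)"
proof -
  have "((\<lambda>x. \<Sum>k\<le>N. c k * ((1 - x) / 2) ^ k) has_real_derivative
     (\<Sum>k\<le>N. c k * (real k * ((1 - x) / 2) ^ (k - 1) * (- 1 / 2)))) (at x)"
    by (auto intro!: derivative_eq_intros sum.cong simp: mult_ac)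
  also have "(\<Sum>k\<le>N. c k * (real k * ((1 - x) / 2) ^ (k - 1) * (- 1 / 2)))
      = (\<Sum>j<N. - (real j + 1) / 2 * c (Suc j) * ((1 - x) / 2) ^ j)"
    unfolding sum.atMost_shift by (auto intro!: sum.cong simp: field_simps)
  finally show ?thesis .
qed

definition jacobiP_antiderivative :: "real \<Rightarrow> real \<Rightarrow> nat \<Rightarrow> real \<Rightarrow> real" where
  "jacobiP_antiderivative \<alpha> \<beta> n x =
     jacA \<alpha> \<beta> (int n + 1) * jacobiP \<alpha> \<beta> (int n + 1) x + jacB \<alpha> \<beta> (int n) * jacobiP \<alpha> \<beta> (int n) x
     + jacC \<alpha> \<beta> (int n - 1) * jacobiP \<alpha> \<beta> (int n - 1) x"

lemma has_real_derivative_jacobiP_antiderivative: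
  assumes a: "\<alpha> > -1" and b: "\<beta> > -1" and L: "n \<le> 1 \<Longrightarrow> \<alpha> + \<beta> + 1 \<noteq> 0"
  shows "(jacobiP_antiderivative \<alpha> \<beta> n has_real_derivative jacobiP \<alpha> \<beta> (int n) x) (at x)"
proof (cases n)
  case 0
  have "jacobiP_antiderivative \<alpha> \<beta> 0 = (\<lambda>x. jacA \<alpha> \<beta> 1 * ((\<alpha> + 1) - (\<alpha> + \<beta> + 2) * ((1 - x) / 2)) + jacB \<alpha> \<beta> 0)"
    using a by (auto simp: jacobiP_antiderivative_def jacobiP_def field_simps)
  then have "(jacobiP_antiderivative \<alpha> \<beta> 0 has_real_derivative jacA \<alpha> \<beta> 1 * ((\<alpha> + \<beta> + 2) / 2)) (at x)"
    by (auto intro!: derivative_eq_intros simp: field_simps)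
  moreover have "jacA \<alpha> \<beta> 1 = (\<alpha> + \<beta> + 1) * 2 / ((\<alpha> + \<beta> + 1) * (\<alpha> + \<beta> + 2))"
    by (simp add: jacA_def add.assoc mult.commute)
  moreover have "\<alpha> + \<beta> + 1 \<noteq> 0" "\<alpha> + \<beta> + 2 \<noteq> 0"
    using L 0 a b by auto
  ultimately show ?thesis
    using 0 by (simp add: jacobiP_def)
next
  case (Suc m)
  let ?d = "\<lambda>k. jacA \<alpha> \<beta> (int n + 1) * jacobi_coeff \<alpha> \<beta> (Suc (Suc m)) k
     + jacB \<alpha> \<beta> (int n) * jacobi_coeff \<alpha> \<beta> (Suc m) k + jacC \<alpha> \<beta> (int n - 1) * jacobi_coeff \<alpha> \<beta> m k"
  define N where "N = Suc (Suc m)"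
  have P: "jacobiP \<alpha> \<beta> (int n + 1) x = (\<Sum>k\<le>N. jacobi_coeff \<alpha> \<beta> (Suc (Suc m)) k * ((1 - x) / 2) ^ k)"
    "jacobiP \<alpha> \<beta> (int n) x = (\<Sum>k\<le>N. jacobi_coeff \<alpha> \<beta> (Suc m) k * ((1 - x) / 2) ^ k)"
    "jacobiP \<alpha> \<beta> (int n - 1) x = (\<Sum>k\<le>N. jacobi_coeff \<alpha> \<beta> m k * ((1 - x) / 2) ^ k)" for x
    using jacobiP_eq_sum_jacobi_coeff[of "Suc (Suc m)" N] jacobiP_eq_sum_jacobi_coeff[of "Suc m" N]
      jacobiP_eq_sum_jacobi_coeff[of m N] Suc
    by (simp_all add: N_def add.commute)
  have expand: "jacobiP_antiderivative \<alpha> \<beta> n = (\<lambda>x. \<Sum>k\<le>N. ?d k * ((1 - x) / 2) ^ k)"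
    unfolding jacobiP_antiderivative_def P
    by (simp add: sum_distrib_left sum.distrib distrib_right mult.assoc)
  have "- (real j + 1) / 2 * ?d (Suc j) = jacobi_coeff \<alpha> \<beta> (Suc m) j" for j
    using jacobi_coeff_three_term[OF a b, of m j] L Suc by (simp add: add.commute)
  then have shift: "(\<Sum>j<N. - (real j + 1) / 2 * ?d (Suc j) * ((1 - x) / 2) ^ j) = jacobiP \<alpha> \<beta> (int n) x"
    using jacobiP_eq_sum_jacobi_coeff[of "Suc m" "Suc m"] Suc by (simp add: N_def lessThan_Suc_atMost)
  show ?thesis
    unfolding expand by (rule DERIV_cong[OF has_real_derivative_sum_powers_half_one_minus shift])
qed

lemma jacobiP_at_minus_one:
  assumes "\<alpha> > -1"
  shows "jacobiP \<alpha> \<beta> (int m) (-1) = (-1) ^ m * pochhammer (\<beta> + 1) m / fact m"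
proof -
  have "\<alpha> + real m \<noteq> of_nat j" if "j < m" for j
    using assms that by linarith
  note Vandermonde = Vandermonde_pochhammer_lemma[where a = "- (real m + \<alpha> + \<beta> + 1)"
      and b = "\<alpha> + real m" and n = m, OF this]
  have "- (- (real m + \<alpha> + \<beta> + 1) + (\<alpha> + real m)) = \<beta> + 1"
    "- (- (real m + \<alpha> + \<beta> + 1)) = real m + \<alpha> + \<beta> + 1" "\<alpha> + real m - real m + 1 = \<alpha> + 1"
    by simp_all
  moreover have "pochhammer (- (\<alpha> + real m)) m = (-1) ^ m * pochhammer (\<alpha> + 1) m"
    unfolding pochhammer_minus by simp
  ultimately
  have sum: "(\<Sum>k\<in>{0..m}. pochhammer (real m + \<alpha> + \<beta> + 1) k * pochhammer (- real m) k /
      (fact k * pochhammer (\<alpha> + 1) k)) = pochhammer (\<beta> + 1) m / ((-1) ^ m * pochhammer (\<alpha> + 1) m)"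
    using Vandermonde by (simp only: of_nat_fact)
  have "pochhammer (\<alpha> + 1) m \<noteq> 0"
    using assms by (auto simp: pochhammer_eq_0_iff)
  moreover have "jacobiP \<alpha> \<beta> (int m) (-1) = pochhammer (\<alpha> + 1) m / fact m *
     (\<Sum>k\<in>{0..m}. pochhammer (real m + \<alpha> + \<beta> + 1) k * pochhammer (- real m) k / (fact k * pochhammer (\<alpha> + 1) k))"
    by (simp add: jacobiP_def atMost_atLeast0 mult.commute)
  ultimately show ?thesis
    unfolding sum by (auto simp: field_simps minus_one_power_iff split: if_splits)
qed

text \<open>The value jacobiP_antiderivative n (-1) = jacS n, divided by P_n(-1).\<close>

lemma jacobi_recurrence_constants_identity_zero:
  assumes "\<alpha> > -1" and "\<beta> > -1" and "\<alpha> + \<beta> \<noteq> 0" and "\<alpha> + \<beta> + 1 \<noteq> 0"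
  shows "jacA \<alpha> \<beta> 1 * - (\<beta> + 1) + jacB \<alpha> \<beta> 0 = - 2 * \<beta> / (\<alpha> + \<beta>)"
proof -
  define s where "s = \<alpha> + \<beta>"
  define t where "t = \<alpha> + \<beta> + 2"
  have nz: "s \<noteq> 0" "t \<noteq> 0" "\<alpha> + \<beta> + 1 \<noteq> 0"
    using assms by (auto simp: s_def t_def)
  have "jacA \<alpha> \<beta> 1 = (\<alpha> + \<beta> + 1) * 2 / ((\<alpha> + \<beta> + 1) * t)"
    by (simp add: jacA_def t_def add.assoc mult.commute)
  then have A: "jacA \<alpha> \<beta> 1 = 2 / t"
    by (simp only: nonzero_mult_divide_mult_cancel_left[OF nz(3)])
  have B: "jacB \<alpha> \<beta> 0 = 2 * (\<alpha> - \<beta>) / (s * t)"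
    by (simp add: jacB_def s_def t_def)
  show ?thesis
    unfolding A B using nz by (simp add: field_simps s_def[symmetric]) (simp add: s_def t_def algebra_simps)
qed

lemma jacobi_recurrence_constants_identity:
  assumes a: "\<alpha> > -1" and b: "\<beta> > -1"
    and L0: "n = 0 \<Longrightarrow> \<alpha> + \<beta> \<noteq> 0" and L1: "n \<le> 1 \<Longrightarrow> \<alpha> + \<beta> + 1 \<noteq> 0"
  shows "jacA \<alpha> \<beta> (int n + 1) * (- (\<beta> + real n + 1) / (real n + 1)) + jacB \<alpha> \<beta> (int n)
      + jacC \<alpha> \<beta> (int n - 1) * (- real n / (\<beta> + real n)) = - 2 * \<beta> / ((\<alpha> + \<beta> + real n) * (real n + 1))"
proof (cases "n = 0")
  case True
  then show ?thesis
    using jacobi_recurrence_constants_identity_zero[OF a b] L0 L1 by simp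
next
  case False
  define S0 where "S0 = \<alpha> + \<beta> + 2 * real n"
  define S1 where "S1 = \<alpha> + \<beta> + 2 * real n + 1"
  define S2 where "S2 = \<alpha> + \<beta> + 2 * real n + 2"
  define T where "T = \<alpha> + \<beta> + real n"
  define N1 where "N1 = real n + 1"
  define Bn where "Bn = \<beta> + real n"
  have "n \<ge> 1"
    using False by simp
  then have nz: "S0 \<noteq> 0" "S1 \<noteq> 0" "S2 \<noteq> 0" "T \<noteq> 0" "N1 \<noteq> 0" "Bn \<noteq> 0"
    using a b L1 unfolding S0_def S1_def S2_def T_def N1_def Bn_def
    by (cases "n = 1"; simp; linarith)+
  have A: "jacA \<alpha> \<beta> (int n + 1) = 2 * (T + 1) / (S1 * S2)"
    by (simp add: jacA_def T_def S1_def S2_def algebra_simps)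
  have B: "jacB \<alpha> \<beta> (int n) = 2 * (\<alpha> - \<beta>) / (S0 * S2)"
    by (simp add: jacB_def S0_def S2_def)
  have C: "jacC \<alpha> \<beta> (int n - 1) = - 2 * (\<alpha> + real n) * Bn / (T * S0 * S1)"
    by (simp add: jacC_def T_def S0_def S1_def Bn_def algebra_simps)
  have key: "- (T + 1) * (Bn + 1) * T * S0 + (\<alpha> - \<beta>) * T * S1 * N1 + (\<alpha> + real n) * real n * S2 * N1
      = - \<beta> * S0 * S1 * S2"
    unfolding S0_def S1_def S2_def T_def N1_def Bn_def by algebra
  have "jacA \<alpha> \<beta> (int n + 1) * (- (\<beta> + real n + 1) / (real n + 1)) + jacB \<alpha> \<beta> (int n)
      + jacC \<alpha> \<beta> (int n - 1) * (- real n / (\<beta> + real n))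
      = 2 * (- (T + 1) * (Bn + 1) * T * S0 + (\<alpha> - \<beta>) * T * S1 * N1 + (\<alpha> + real n) * real n * S2 * N1)
        / (T * S0 * S1 * S2 * N1)"
    unfolding A B C N1_def[symmetric] Bn_def[symmetric] using nz by (simp add: field_simps)
  also have "\<dots> = - 2 * \<beta> / ((\<alpha> + \<beta> + real n) * (real n + 1))"
    unfolding key T_def[symmetric] N1_def[symmetric] using nz by (simp add: field_simps)
  finally show ?thesis .
qed

lemma jacobiP_antiderivative_at_minus_one:
  assumes a: "\<alpha> > -1" and b: "\<beta> > -1"
    and "n = 0 \<Longrightarrow> \<alpha> + \<beta> \<noteq> 0" and "n \<le> 1 \<Longrightarrow> \<alpha> + \<beta> + 1 \<noteq> 0"
  shows "jacobiP_antiderivative \<alpha> \<beta> n (-1) = jacS \<alpha> \<beta> n"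
proof -
  define \<pi> where "\<pi> = (-1) ^ n * pochhammer (\<beta> + 1) n / fact n"
  have P: "jacobiP \<alpha> \<beta> (int n) (-1) = \<pi>"
    using jacobiP_at_minus_one[OF a] by (simp add: \<pi>_def)
  have P_succ: "jacobiP \<alpha> \<beta> (int n + 1) (-1) = - (\<beta> + real n + 1) / (real n + 1) * \<pi>"
    using jacobiP_at_minus_one[OF a, of \<beta> "Suc n"] by (simp add: \<pi>_def pochhammer_Suc field_simps)
  \<comment> \<open>the factor n also covers n = 0, where P_{-1} = 0\<close>
  have P_pred: "jacobiP \<alpha> \<beta> (int n - 1) (-1) = - real n / (\<beta> + real n) * \<pi>"
  proof (cases n)
    case 0
    then show ?thesis by (simp add: jacobiP_def)
  next
    case (Suc m)
    have "\<pi> = - (\<beta> + m + 1) / (m + 1) * jacobiP \<alpha> \<beta> (int m) (-1)"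
      unfolding \<pi>_def jacobiP_at_minus_one[OF a] Suc by (simp add: pochhammer_Suc divide_simps) (simp add: algebra_simps)
    moreover have "\<beta> + m + 1 \<noteq> 0"
      using b by linarith
    ultimately show ?thesis
      using Suc by (simp add: divide_simps) (simp add: algebra_simps)
  qed
  have S: "jacS \<alpha> \<beta> n = - 2 * \<beta> / ((\<alpha> + \<beta> + real n) * (real n + 1)) * \<pi>"
    by (simp add: jacS_def \<pi>_def pochhammer_rec field_simps)
  have "jacobiP_antiderivative \<alpha> \<beta> n (-1) = (jacA \<alpha> \<beta> (int n + 1) * (- (\<beta> + real n + 1) / (real n + 1))
      + jacB \<alpha> \<beta> (int n) + jacC \<alpha> \<beta> (int n - 1) * (- real n / (\<beta> + real n))) * \<pi>"
    unfolding jacobiP_antiderivative_def P P_succ P_pred by (simp add: algebra_simps)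
  then show ?thesis
    by (simp only: jacobi_recurrence_constants_identity[OF assms] S)
qed

lemma Rtilde_poly_three_term:
  fixes p :: "real poly"
  assumes a: "\<alpha> > -1" and b: "\<beta> > -1"
    and L0: "n = 0 \<Longrightarrow> \<alpha> + \<beta> \<noteq> 0" and L1: "n \<le> 1 \<Longrightarrow> \<alpha> + \<beta> + 1 \<noteq> 0"
    and y: "-1 \<le> y"
  shows "jacA \<alpha> \<beta> (int n + 1) * Rtilde \<alpha> \<beta> (poly p) (int n + 1) y
      + jacB \<alpha> \<beta> (int n) * Rtilde \<alpha> \<beta> (poly p) (int n) y
      + jacC \<alpha> \<beta> (int n - 1) * Rtilde \<alpha> \<beta> (poly p) (int n - 1) y
    = integral {-1..y} (Rtilde \<alpha> \<beta> (poly p) (int n)) + jacS \<alpha> \<beta> n * integral {-1..y} (poly p)"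
proof -
  define q where "q = pcompose p [:-1, 1:]"
  have Rtilde_q: "Rtilde \<alpha> \<beta> (poly p) k = (\<lambda>s. integral {-1..s} (\<lambda>t. poly q (s - t) * jacobiP \<alpha> \<beta> k t))" for k
    by (simp add: fun_eq_iff Rtilde_def q_def poly_pcompose algebra_simps)
  have integrable: "(\<lambda>t. c * (poly q (y - t) * jacobiP \<alpha> \<beta> k t)) integrable_on {-1..y}" for c k
    by (intro integrable_continuous_interval continuous_intros continuous_on_jacobiP)
  have "jacA \<alpha> \<beta> (int n + 1) * Rtilde \<alpha> \<beta> (poly p) (int n + 1) y
      + jacB \<alpha> \<beta> (int n) * Rtilde \<alpha> \<beta> (poly p) (int n) y
      + jacC \<alpha> \<beta> (int n - 1) * Rtilde \<alpha> \<beta> (poly p) (int n - 1) y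
    = integral {-1..y} (\<lambda>t. jacA \<alpha> \<beta> (int n + 1) * (poly q (y - t) * jacobiP \<alpha> \<beta> (int n + 1) t)
        + jacB \<alpha> \<beta> (int n) * (poly q (y - t) * jacobiP \<alpha> \<beta> (int n) t)
        + jacC \<alpha> \<beta> (int n - 1) * (poly q (y - t) * jacobiP \<alpha> \<beta> (int n - 1) t))"
    unfolding Rtilde_q using integrable by (simp add: integral_add integrable_add)
  also have "\<dots> = integral {-1..y} (\<lambda>t. poly q (y - t) * jacobiP_antiderivative \<alpha> \<beta> n t)"
    by (simp add: jacobiP_antiderivative_def algebra_simps)
  also have "\<dots> = integral {-1..y} (\<lambda>s. integral {-1..s} (\<lambda>t. poly q (s - t) * jacobiP \<alpha> \<beta> (int n) t))
      + jacobiP_antiderivative \<alpha> \<beta> n (-1) * integral {-1..y} (\<lambda>s. poly q (s - -1))"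
    by (rule poly_convolution_antiderivative[OF has_real_derivative_jacobiP_antiderivative[OF a b L1]
          continuous_on_jacobiP y])
  also have "\<dots> = integral {-1..y} (Rtilde \<alpha> \<beta> (poly p) (int n)) + jacS \<alpha> \<beta> n * integral {-1..y} (poly p)"
    by (simp add: Rtilde_q jacobiP_antiderivative_at_minus_one[OF a b L0 L1] q_def poly_pcompose)
  finally show ?thesis .
qed

lemma jacA_nonzero:
  assumes "\<alpha> > -1" and "\<beta> > -1" and "n = 0 \<Longrightarrow> \<alpha> + \<beta> + 1 \<noteq> 0"
  shows "jacA \<alpha> \<beta> (int n + 1) \<noteq> 0"
proof -
  have "\<alpha> + \<beta> + real n + 1 \<noteq> 0" "\<alpha> + \<beta> + 2 * real n + 1 \<noteq> 0"
    using assms by (cases "n = 0"; simp)+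
  moreover have "\<alpha> + \<beta> + 2 * real n + 2 \<noteq> 0"
    using assms by simp
  ultimately show ?thesis
    by (simp add: jacA_def)
qed

theorem theorem4p6:
  fixes \<alpha> \<beta> :: real and M n :: nat and a :: "nat \<Rightarrow> real" and y :: real
  assumes "\<alpha> > -1" and "\<beta> > -1"
    and "n = 0 \<Longrightarrow> \<alpha> + \<beta> \<noteq> 0"
    and "n \<le> 1 \<Longrightarrow> \<alpha> + \<beta> + 1 \<noteq> 0"
    and "y \<in> {-1..1}"
  defines "f \<equiv> jacobi_sum \<alpha> \<beta> a M"
  shows "Rtilde \<alpha> \<beta> f (int n + 1) y =
      1 / jacA \<alpha> \<beta> (int n + 1) * integral {-1..y} (\<lambda>s. Rtilde \<alpha> \<beta> f (int n) s)
    - jacB \<alpha> \<beta> (int n) / jacA \<alpha> \<beta> (int n + 1) * Rtilde \<alpha> \<beta> f (int n) y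
    - jacC \<alpha> \<beta> (int n - 1) / jacA \<alpha> \<beta> (int n + 1) * Rtilde \<alpha> \<beta> f (int n - 1) y
    + jacS \<alpha> \<beta> n / jacA \<alpha> \<beta> (int n + 1) * integral {-1..y} f"
proof -
  obtain p where f: "f = poly p"
    using jacobi_sum_eq_poly unfolding f_def by blast
  have "jacA \<alpha> \<beta> (int n + 1) \<noteq> 0"
    using jacA_nonzero assms(1,2,4) by simp
  moreover have "-1 \<le> y"
    using assms(5) by simp
  ultimately have "Rtilde \<alpha> \<beta> f (int n + 1) y = (integral {-1..y} (Rtilde \<alpha> \<beta> f (int n))
      + jacS \<alpha> \<beta> n * integral {-1..y} f - jacB \<alpha> \<beta> (int n) * Rtilde \<alpha> \<beta> f (int n) y
      - jacC \<alpha> \<beta> (int n - 1) * Rtilde \<alpha> \<beta> f (int n - 1) y) / jacA \<alpha> \<beta> (int n + 1)"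
    using Rtilde_poly_three_term[where n = n and y = y and p = p, OF assms(1-4)] unfolding f
    by (simp add: field_simps)
  then show ?thesis
    by (simp add: diff_divide_distrib add_divide_distrib)
qed

end
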